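(* Let $(X_n)_{n\ge0}$ be a Bienaym\'e--Galton--Watson branching process with $X_0=1$ and offspring distribution $\mathrm{Bin}(n_0,1/n_0)$, $n_0\ge2$, and let $Y_n=\sum_{k=0}^nX_k$. There exist constants $c_1,c_2$ (not depending on $n_0$) such that for all $n\ge1$ and $\lambda>0$, $$P(X_n[n]\ge\lambda n)\le c_1e^{-\lambda/6},\qquad P(Y_n[n]\ge\lambda n^2)\le c_2e^{-\lambda/5}.$$
   Context: For a random variable $\xi$ and integer $n\ge1$, $\xi[n]$ denotes a random variable distributed as $\sum_{i=1}^n\xi_i$ where $\xi_1,\dots,\xi_n$ are i.i.d. copies of $\xi$. *)

theory Defs
  imports "HOL-Probability.Probability"
begin

text \<open>xi[n]: the law of the sum of n i.i.d. copies of a random variable with law xi.\<close>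
primrec iid_sum_pmf :: "nat pmf \<Rightarrow> nat \<Rightarrow> nat pmf" where
  "iid_sum_pmf xi 0 = return_pmf 0"
| "iid_sum_pmf xi (Suc k) =
     bind_pmf xi (\<lambda>a. map_pmf (\<lambda>s. a + s) (iid_sum_pmf xi k))"

text \<open>Joint law of (X_n, Y_n) for the Bienayme-Galton-Watson process with offspring
  law xi, X_0 = 1, Y_n = X_0 + ... + X_n.  Given X_n = x, X_(n+1) is the sum of x
  i.i.d. offspring counts.\<close>
primrec bgw_XY :: "nat pmf \<Rightarrow> nat \<Rightarrow> (nat \<times> nat) pmf" where
  "bgw_XY xi 0 = return_pmf (1, 1)"
| "bgw_XY xi (Suc n) =
     bind_pmf (bgw_XY xi n)
       (\<lambda>(x, y). map_pmf (\<lambda>z. (z, y + z)) (iid_sum_pmf xi x))"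

definition bgw_X :: "nat pmf \<Rightarrow> nat \<Rightarrow> nat pmf" where
  "bgw_X xi n = map_pmf fst (bgw_XY xi n)"

definition bgw_Y :: "nat pmf \<Rightarrow> nat \<Rightarrow> nat pmf" where
  "bgw_Y xi n = map_pmf snd (bgw_XY xi n)"

end

theory Submission
  imports Defs
begin

text \<open>Let G_n(a, z) = E[a^X_n z^Y_n]. Conditioning on generation n gives
  G_(n+1)(a, z) = G_n(phi(a z), z) with phi the offspring pgf, and phi(t) <= e^(t-1) for
  Bin(n0, 1/n0) uniformly in n0. Hence G_n(a, z) <= z f^n(a) for f(t) = e^(z t - 1).
  For z = e^s the quantity w_k = s + z f^k(a) - 1 obeys w_(k+1) = s + e^(w_k) - 1
  <= s + w_k + w_k^2, and c/(m - k) is a supersolution of this Riccati recursion.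
  With z = 1, a = e^(1/(6n)) for X_n and z = e^(1/(5n^2)), a = 1 for Y_n this shows that the
  pgfs of X_n[n] and Y_n[n] at these points are bounded by constants, and Chernoff's
  bound gives the exponential tails.\<close>

definition pgf :: "nat pmf \<Rightarrow> ennreal \<Rightarrow> ennreal" where
  "pgf p t = (\<integral>\<^sup>+k. t ^ k \<partial>measure_pmf p)"

lemma pgf_iid_sum_pmf: "pgf (iid_sum_pmf xi m) t = pgf xi t ^ m"
proof (induction m)
  case 0
  then show ?case by (simp add: pgf_def)
next
  case (Suc m)
  have "pgf (iid_sum_pmf xi (Suc m)) t = (\<integral>\<^sup>+a. \<integral>\<^sup>+s. t ^ a * t ^ s \<partial>iid_sum_pmf xi m \<partial>xi)"
    by (simp add: pgf_def power_add)
  also have "\<dots> = (\<integral>\<^sup>+a. t ^ a * pgf (iid_sum_pmf xi m) t \<partial>xi)"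
    by (simp add: pgf_def nn_integral_cmult)
  also have "\<dots> = pgf xi t * pgf (iid_sum_pmf xi m) t"
    by (simp add: pgf_def nn_integral_multc)
  finally show ?case using Suc by (simp add: mult.commute)
qed

lemma pgf_binomial_pmf:
  assumes "0 \<le> p" "p \<le> 1" "0 \<le> t"
  shows "pgf (binomial_pmf n p) (ennreal t) = ennreal ((1 - p + p * t) ^ n)"
proof -
  have "pgf (binomial_pmf n p) (ennreal t) = (\<Sum>k\<le>n. ennreal t ^ k * pmf (binomial_pmf n p) k)"
    unfolding pgf_def using assms
    by (intro nn_integral_measure_pmf_support) (auto simp: set_pmf_binomial_eq split: if_splits)
  also have "\<dots> = ennreal (\<Sum>k\<le>n. real (n choose k) * (p * t) ^ k * (1 - p) ^ (n - k))"
    using assms by (subst sum_ennreal[symmetric])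
      (auto simp: ennreal_power ennreal_mult'[symmetric] pmf_binomial power_mult_distrib mult_ac
            intro!: sum.cong)
  also have "\<dots> = ennreal ((p * t + (1 - p)) ^ n)"
    by (subst binomial_ring) simp
  also have "\<dots> = ennreal ((1 - p + p * t) ^ n)"
    by (simp add: add.commute)
  finally show ?thesis .
qed

lemma pgf_binomial_pmf_le_exp:
  assumes "0 \<le> p" "p \<le> 1" "0 \<le> t"
  shows "pgf (binomial_pmf n p) (ennreal t) \<le> ennreal (exp (n * p * (t - 1)))"
proof -
  have "0 \<le> (1 - p) + p * t"
    using assms by simp
  then have "(1 + p * (t - 1)) ^ n \<le> exp (p * (t - 1)) ^ n"
    by (intro power_mono exp_ge_add_one_self) (simp add: algebra_simps)
  then show ?thesis
    using assms by (simp add: pgf_binomial_pmf exp_of_nat_mult[symmetric] algebra_simps ennreal_leI)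
qed

lemma chernoff_bound_pgf:
  assumes "0 \<le> s" "0 \<le> B" "pgf P (ennreal (exp s)) \<le> ennreal B"
  shows "measure_pmf.prob P {k. real k \<ge> x} \<le> B * exp (- s * x)"
proof -
  have indicator_le: "indicator {k. real k \<ge> x} k \<le> ennreal (exp (- s * x)) * ennreal (exp s) ^ k"
    for k :: nat
  proof -
    have "ennreal (exp (- s * x)) * ennreal (exp s) ^ k = ennreal (exp (s * (real k - x)))"
      by (simp add: ennreal_power ennreal_mult'[symmetric] exp_of_nat_mult[symmetric]
                    exp_add[symmetric] algebra_simps)
    then show ?thesis
      using assms by (auto split: split_indicator)
  qed
  have "ennreal (measure_pmf.prob P {k. real k \<ge> x}) = (\<integral>\<^sup>+k. indicator {k. real k \<ge> x} k \<partial>P)"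
    by (simp add: measure_pmf.emeasure_eq_measure[symmetric])
  also have "\<dots> \<le> (\<integral>\<^sup>+k. ennreal (exp (- s * x)) * ennreal (exp s) ^ k \<partial>P)"
    by (intro nn_integral_mono indicator_le)
  also have "\<dots> = ennreal (exp (- s * x)) * pgf P (ennreal (exp s))"
    by (simp add: nn_integral_cmult pgf_def)
  also have "\<dots> \<le> ennreal (exp (- s * x)) * ennreal B"
    using assms by (intro mult_left_mono) auto
  also have "\<dots> = ennreal (B * exp (- s * x))"
    using assms by (simp add: ennreal_mult' mult.commute)
  finally show ?thesis
    using assms by (simp add: ennreal_le_iff)
qed

definition bgw_gf :: "nat pmf \<Rightarrow> nat \<Rightarrow> ennreal \<Rightarrow> ennreal \<Rightarrow> ennreal" where
  "bgw_gf xi n a z = (\<integral>\<^sup>+p. a ^ fst p * z ^ snd p \<partial>measure_pmf (bgw_XY xi n))"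

lemma bgw_gf_0: "bgw_gf xi 0 a z = a * z"
  by (simp add: bgw_gf_def)

lemma bgw_gf_Suc: "bgw_gf xi (Suc n) a z = bgw_gf xi n (pgf xi (a * z)) z"
proof -
  have "bgw_gf xi (Suc n) a z =
      (\<integral>\<^sup>+p. \<integral>\<^sup>+k. (a * z) ^ k * z ^ snd p \<partial>iid_sum_pmf xi (fst p) \<partial>bgw_XY xi n)"
    by (simp add: bgw_gf_def split_beta power_add power_mult_distrib mult_ac)
  also have "\<dots> = (\<integral>\<^sup>+p. pgf xi (a * z) ^ fst p * z ^ snd p \<partial>bgw_XY xi n)"
    by (simp add: nn_integral_multc pgf_iid_sum_pmf[symmetric]) (simp add: pgf_def)
  finally show ?thesis
    by (simp add: bgw_gf_def)
qed

lemma bgw_gf_mono: "a \<le> b \<Longrightarrow> bgw_gf xi n a z \<le> bgw_gf xi n b z"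
  unfolding bgw_gf_def by (intro nn_integral_mono mult_right_mono power_mono) auto

lemma pgf_bgw_X: "pgf (bgw_X xi n) t = bgw_gf xi n t 1"
  by (simp add: pgf_def bgw_gf_def bgw_X_def)

lemma pgf_bgw_Y: "pgf (bgw_Y xi n) t = bgw_gf xi n 1 t"
  by (simp add: pgf_def bgw_gf_def bgw_Y_def)

lemma bgw_gf_le_iterate:
  assumes pgf_le: "\<And>t. 0 \<le> t \<Longrightarrow> pgf xi (ennreal t) \<le> ennreal (exp (t - 1))"
    and "0 \<le> a" "0 \<le> z"
  shows "bgw_gf xi n (ennreal a) (ennreal z) \<le> ennreal (z * ((\<lambda>t. exp (z * t - 1)) ^^ n) a)"
  using \<open>0 \<le> a\<close>
proof (induction n arbitrary: a)
  case 0
  then show ?case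
    using \<open>0 \<le> z\<close> by (simp add: bgw_gf_0 ennreal_mult' mult.commute)
next
  case (Suc n)
  let ?f = "\<lambda>t. exp (z * t - 1)"
  have "bgw_gf xi (Suc n) (ennreal a) (ennreal z) = bgw_gf xi n (pgf xi (ennreal (a * z))) (ennreal z)"
    using Suc.prems \<open>0 \<le> z\<close> by (simp add: bgw_gf_Suc ennreal_mult')
  also have "\<dots> \<le> bgw_gf xi n (ennreal (?f a)) (ennreal z)"
    using Suc.prems \<open>0 \<le> z\<close> by (intro bgw_gf_mono) (simp add: pgf_le mult.commute)
  also have "\<dots> \<le> ennreal (z * (?f ^^ n) (?f a))"
    by (rule Suc.IH) simp
  also have "(?f ^^ n) (?f a) = (?f ^^ Suc n) a"
    by (simp add: funpow_Suc_right del: funpow.simps)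
  finally show ?case .
qed

lemma riccati_comparison:
  fixes w :: "nat \<Rightarrow> real" and s c m :: real
  assumes "0 \<le> s" "0 < c" "real n < m" "s * m\<^sup>2 \<le> c * (1 - c)" "c / (m - real n) \<le> 1"
    and w_0: "w 0 \<le> c / m" and w_nonneg: "\<And>k. 0 \<le> w k"
    and w_Suc: "\<And>k. k < n \<Longrightarrow> w k \<le> 1 \<Longrightarrow> w (Suc k) \<le> s + w k + (w k)\<^sup>2"
  shows "k \<le> n \<Longrightarrow> w k \<le> c / (m - real k)"
proof (induction k)
  case 0
  then show ?case using w_0 by simp
next
  case (Suc k)
  define j where "j = m - real k"
  have IH: "w k \<le> c / j"
    using Suc by (simp add: j_def)
  have j_gt_1: "1 < j" and j_le_m: "j \<le> m"
    using Suc.prems assms(3) by (auto simp: j_def)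
  have "c / j \<le> c / (m - real n)"
    using Suc.prems assms(2,3) by (intro divide_left_mono) (auto simp: j_def)
  then have "w k \<le> 1"
    using IH assms(5) by linarith
  then have "w (Suc k) \<le> s + w k + (w k)\<^sup>2"
    using w_Suc Suc.prems by simp
  also have "\<dots> \<le> s + c / j + (c / j)\<^sup>2"
    using IH w_nonneg by (intro add_mono power_mono) auto
  also have "\<dots> \<le> c / (j - 1)"
  proof -
    \<comment> \<open>the slack s j^2 <= c - c^2 pays for s, and c/j + c/j^2 <= c/(j - 1)\<close>
    have "s * j\<^sup>2 \<le> s * m\<^sup>2"
      using assms(1) j_gt_1 j_le_m by (intro mult_left_mono power_mono) auto
    then have "s * j\<^sup>2 + c\<^sup>2 \<le> c"
      using assms(4) by (simp add: algebra_simps power2_eq_square)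
    moreover have "s + (c / j)\<^sup>2 = (s * j\<^sup>2 + c\<^sup>2) / j\<^sup>2"
      using j_gt_1 by (simp add: field_simps)
    ultimately have "s + (c / j)\<^sup>2 \<le> c / j\<^sup>2"
      by (simp add: divide_right_mono)
    moreover have "c / j + c / j\<^sup>2 \<le> c / (j - 1)"
      using j_gt_1 assms(2) by (simp add: field_simps power2_eq_square)
    ultimately show ?thesis by linarith
  qed
  finally show ?case
    by (simp add: j_def algebra_simps)
qed

lemma exp_iterate_le:
  fixes s c m t\<^sub>0 :: real
  assumes "0 \<le> s" "0 < c" "real n < m" "s * m\<^sup>2 \<le> c * (1 - c)" "c / (m - real n) \<le> 1"
    and "1 \<le> t\<^sub>0" "s + exp s * t\<^sub>0 - 1 \<le> c / m"
  shows "exp s * ((\<lambda>t. exp (exp s * t - 1)) ^^ n) t\<^sub>0 \<le> 1 + c / (m - real n)"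
proof -
  define f where "f = (\<lambda>t. exp (exp s * t - 1))"
  define w where "w k = s + exp s * (f ^^ k) t\<^sub>0 - 1" for k
  have w_Suc: "w (Suc k) = s + exp (w k) - 1" for k
    by (simp add: w_def f_def exp_add[symmetric])
  have w_nonneg: "0 \<le> w k" for k
  proof (induction k)
    case 0
    have "1 * 1 \<le> exp s * t\<^sub>0"
      using assms(1,6) by (intro mult_mono) auto
    then show ?case
      using assms(1) by (simp add: w_def)
  next
    case (Suc k)
    have "1 + w k \<le> exp (w k)"
      by (rule exp_ge_add_one_self)
    then show ?case
      using Suc.IH assms(1) unfolding w_Suc by linarith
  qed
  have "w (Suc k) \<le> s + w k + (w k)\<^sup>2" if "w k \<le> 1" for k
    using exp_bound[OF w_nonneg that] by (simp add: w_Suc)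
  then have "w n \<le> c / (m - real n)"
    using assms w_nonneg by (intro riccati_comparison[of s c n m w]) (auto simp: w_def)
  then show ?thesis
    using assms(1) by (simp add: w_def f_def)
qed

lemma exp_iterate_critical_le:
  assumes "1 \<le> n"
  shows "((\<lambda>t. exp (t - 1)) ^^ n) (exp (1 / (6 * real n))) \<le> 1 + 1 / (2 * real n)"
proof -
  define x where "x = 1 / (6 * real n)"
  have "0 \<le> x" "x \<le> 1"
    using assms by (auto simp: x_def)
  then have "exp x - 1 \<le> x + x * x"
    using exp_bound[of x] by (simp add: power2_eq_square)
  also have "\<dots> \<le> 2 * x"
    using \<open>0 \<le> x\<close> \<open>x \<le> 1\<close> mult_left_mono[of x 1 x] by simp
  finally have "exp x - 1 \<le> 2 * x" .
  then have "exp 0 * ((\<lambda>t. exp (exp 0 * t - 1)) ^^ n) (exp x) \<le> 1 + 1 / (3 * real n - real n)"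
    using assms by (intro exp_iterate_le) (auto simp: x_def)
  then show ?thesis
    by (simp add: x_def)
qed

lemma exp_iterate_tilted_le:
  assumes "5 \<le> n"
  defines "s \<equiv> 1 / (5 * (real n)\<^sup>2)"
  shows "exp s * ((\<lambda>t. exp (exp s * t - 1)) ^^ n) 1 \<le> 1 + 5 / real n"
proof -
  have n: "5 \<le> real n"
    using assms(1) by simp
  have "1 \<le> (real n)\<^sup>2"
    using n by (simp add: one_le_power)
  then have "0 < s" "s \<le> 1 / 5"
    using n by (auto simp: s_def divide_le_eq_1)
  then have "s + exp s - 1 \<le> 2 * s + s\<^sup>2"
    using exp_bound[of s] by simp
  also have "\<dots> \<le> 11/5 * s"
    using \<open>0 < s\<close> \<open>s \<le> 1 / 5\<close> mult_left_mono[of s "1/5" s] by (simp add: power2_eq_square)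
  also have "\<dots> \<le> (1/2) / (11/10 * real n)"
    using n mult_left_mono[of 1 "real n" "real n"] by (simp add: s_def field_simps power2_eq_square)
  finally have "exp s * ((\<lambda>t. exp (exp s * t - 1)) ^^ n) 1 \<le> 1 + (1/2) / (11/10 * real n - real n)"
    using \<open>0 < s\<close> n by (intro exp_iterate_le) (auto simp: s_def field_simps power2_eq_square)
  also have "\<dots> = 1 + 5 / real n"
    using n by (simp add: field_simps)
  finally show ?thesis .
qed

lemma pgf_iid_sum_bgw_X_le:
  assumes pgf_le: "\<And>t. 0 \<le> t \<Longrightarrow> pgf xi (ennreal t) \<le> ennreal (exp (t - 1))" and "1 \<le> n"
  shows "pgf (iid_sum_pmf (bgw_X xi n) n) (ennreal (exp (1 / (6 * real n)))) \<le> ennreal (exp (1/2))"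
proof -
  let ?t = "exp (1 / (6 * real n))"
  have "bgw_gf xi n (ennreal ?t) (ennreal 1) \<le> ennreal (1 * ((\<lambda>t. exp (1 * t - 1)) ^^ n) ?t)"
    using pgf_le by (intro bgw_gf_le_iterate) auto
  also have "\<dots> \<le> ennreal (1 + (1/2) / real n)"
    using exp_iterate_critical_le[OF \<open>1 \<le> n\<close>] by (intro ennreal_leI) simp
  finally have gf_le: "bgw_gf xi n (ennreal ?t) 1 \<le> ennreal (1 + (1/2) / real n)"
    by simp
  have "pgf (iid_sum_pmf (bgw_X xi n) n) (ennreal ?t) = bgw_gf xi n (ennreal ?t) 1 ^ n"
    by (simp add: pgf_iid_sum_pmf pgf_bgw_X)
  also have "\<dots> \<le> ennreal ((1 + (1/2) / real n) ^ n)"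
    using gf_le by (simp add: ennreal_power[symmetric] power_mono)
  also have "\<dots> \<le> ennreal (exp (1/2))"
    using \<open>1 \<le> n\<close> by (intro ennreal_leI exp_ge_one_plus_x_over_n_power_n) auto
  finally show ?thesis .
qed

lemma pgf_iid_sum_bgw_Y_bounded:
  "\<exists>C\<ge>0. \<forall>xi n. (\<forall>t\<ge>0. pgf xi (ennreal t) \<le> ennreal (exp (t - 1))) \<longrightarrow> 1 \<le> n \<longrightarrow>
     pgf (iid_sum_pmf (bgw_Y xi n) n) (ennreal (exp (1 / (5 * (real n)\<^sup>2)))) \<le> ennreal C"
proof -
  define z where "z n = exp (1 / (5 * (real n)\<^sup>2))" for n :: nat
  define B where "B n = (z n * ((\<lambda>t. exp (z n * t - 1)) ^^ n) 1) ^ n" for n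
  \<comment> \<open>for n < 5 the Riccati window is too narrow, but these finitely many n only enlarge C\<close>
  define C where "C = max (exp 5) (Max (B ` {1..4}))"
  have iterate_nonneg: "0 \<le> ((\<lambda>t. exp (z n * t - 1)) ^^ n) 1" for n
    by (cases n) auto
  have pgf_le_B: "pgf (iid_sum_pmf (bgw_Y xi n) n) (ennreal (z n)) \<le> ennreal (B n)"
    if "\<forall>t\<ge>0. pgf xi (ennreal t) \<le> ennreal (exp (t - 1))" for xi n
  proof -
    have "pgf (iid_sum_pmf (bgw_Y xi n) n) (ennreal (z n)) = bgw_gf xi n (ennreal 1) (ennreal (z n)) ^ n"
      by (simp add: pgf_iid_sum_pmf pgf_bgw_Y)
    also have "\<dots> \<le> ennreal (z n * ((\<lambda>t. exp (z n * t - 1)) ^^ n) 1) ^ n"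
      using that by (intro power_mono bgw_gf_le_iterate) (auto simp: z_def)
    also have "\<dots> = ennreal (B n)"
      using iterate_nonneg[of n] by (simp add: B_def z_def ennreal_power)
    finally show ?thesis .
  qed
  have B_le_exp: "B n \<le> exp 5" if "5 \<le> n" for n
  proof -
    have "B n \<le> (1 + 5 / real n) ^ n"
      unfolding B_def using exp_iterate_tilted_le[OF that] iterate_nonneg[of n]
      by (intro power_mono) (auto simp: z_def)
    also have "\<dots> \<le> exp 5"
      using that by (intro exp_ge_one_plus_x_over_n_power_n) auto
    finally show ?thesis .
  qed
  have B_le_C: "B n \<le> C" if "1 \<le> n" for n
  proof (cases "5 \<le> n")
    case True
    then show ?thesis
      using B_le_exp[OF True] by (simp add: C_def le_max_iff_disj)
  next
    case False
    then have "B n \<le> Max (B ` {1..4})"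
      using that by (intro Max_ge) auto
    then show ?thesis
      by (simp add: C_def)
  qed
  have "pgf (iid_sum_pmf (bgw_Y xi n) n) (ennreal (z n)) \<le> ennreal C"
    if "\<forall>t\<ge>0. pgf xi (ennreal t) \<le> ennreal (exp (t - 1))" "1 \<le> n" for xi n
    using pgf_le_B[OF that(1)] ennreal_leI[OF B_le_C[OF that(2)]] by (rule order_trans)
  moreover have "0 \<le> C"
    by (simp add: C_def le_max_iff_disj)
  ultimately show ?thesis
    unfolding z_def by blast
qed

theorem lemma2p2:
  "\<exists>c1 c2 :: real. \<forall>n0 :: nat. n0 \<ge> 2 \<longrightarrow> (\<forall>n :: nat. n \<ge> 1 \<longrightarrow> (\<forall>lam :: real. lam > 0 \<longrightarrow>
     measure_pmf.prob (iid_sum_pmf (bgw_X (binomial_pmf n0 (1 / real n0)) n) n)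
        {k. real k \<ge> lam * real n} \<le> c1 * exp (- lam / 6) \<and>
     measure_pmf.prob (iid_sum_pmf (bgw_Y (binomial_pmf n0 (1 / real n0)) n) n)
        {k. real k \<ge> lam * (real n)^2} \<le> c2 * exp (- lam / 5)))"
proof -
  obtain C where "0 \<le> C" and C: "\<And>xi n. \<forall>t\<ge>0. pgf xi (ennreal t) \<le> ennreal (exp (t - 1)) \<Longrightarrow> 1 \<le> n \<Longrightarrow>
      pgf (iid_sum_pmf (bgw_Y xi n) n) (ennreal (exp (1 / (5 * (real n)\<^sup>2)))) \<le> ennreal C"
    using pgf_iid_sum_bgw_Y_bounded by blast
  show ?thesis
  proof (rule exI[of _ "exp (1/2)"], rule exI[of _ C], intro allI impI conjI)
    fix n0 n :: nat and lam :: real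
    assume "n0 \<ge> 2" "n \<ge> 1" "lam > 0"
    let ?xi = "binomial_pmf n0 (1 / real n0)"
    have pgf_le: "pgf ?xi (ennreal t) \<le> ennreal (exp (t - 1))" if "0 \<le> t" for t
      using pgf_binomial_pmf_le_exp[of "1 / real n0" t n0] that \<open>n0 \<ge> 2\<close> by simp
    have "measure_pmf.prob (iid_sum_pmf (bgw_X ?xi n) n) {k. real k \<ge> lam * real n}
        \<le> exp (1/2) * exp (- (1 / (6 * real n)) * (lam * real n))"
      using pgf_le \<open>n \<ge> 1\<close> by (intro chernoff_bound_pgf pgf_iid_sum_bgw_X_le) auto
    then show "measure_pmf.prob (iid_sum_pmf (bgw_X ?xi n) n) {k. real k \<ge> lam * real n}
        \<le> exp (1/2) * exp (- lam / 6)"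
      using \<open>n \<ge> 1\<close> by simp
    have "measure_pmf.prob (iid_sum_pmf (bgw_Y ?xi n) n) {k. real k \<ge> lam * (real n)\<^sup>2}
        \<le> C * exp (- (1 / (5 * (real n)\<^sup>2)) * (lam * (real n)\<^sup>2))"
      using pgf_le \<open>n \<ge> 1\<close> \<open>0 \<le> C\<close> by (intro chernoff_bound_pgf C) auto
    then show "measure_pmf.prob (iid_sum_pmf (bgw_Y ?xi n) n) {k. real k \<ge> lam * (real n)\<^sup>2}
        \<le> C * exp (- lam / 5)"
      using \<open>n \<ge> 1\<close> by simp
  qed
qed

end
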